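(* In the game $\mathrm{CubeGame}(p,K)$ with expert oracle (defined in the context), any sound planner that makes fewer than $\Omega(p/\log p)$ oracle queries has sample complexity (expected number of actions) $N\ge 2^{\Omega(p\wedge K)}$.
   Context: Fix integers $p,K\ge1$ (with $p$ divisible by $4$). Let $W=\{\pm1\}^p$, $\rho(x,y)=\tfrac12(p-x^\top y)$ the Hamming distance, $w_0=\vec 1$ (all-ones vector), and $g(x)=1-x/p$. The hidden parameter $w^\star$ lies in $W^\star=\{w\in W:\ p/4\le\rho(\vec1,w)\le 3p/4\}$. For $k\ge1$, $W^{\circ k}=\{(w_i)_{i\in[k]}\in W^k:\ \rho(w_{i-1},w_i)\ge p/4\ \forall i\in[k]\}$. Define $f_{w^\star}((w_i)_{i\in[k]})=\big(\prod_{i\in[k]}g(\rho(w_{i-1},w_i))\big)\,g(\rho(w_k,w^\star))$ and $f_{w^\star}(())=g(\rho(w_0,w^\star))$. At each round $t$ the planner either inputs a sequence $S_t=(w^t_i)_{i\in[L_t]}\in W^{\circ L_t}$ with $L_t\in[K]$, or stops ($L_t=0$) and outputs $S_t=(w^t_i)_{i\in[8]}\in W^{\circ 8}$; $N=\min\{t:L_t=0\}$ is the number of actions. After an input it observes $U_t=\mathbb{1}\{\rho(w^t_{L_t-1},w^\star)<p/4\}$, $V_t=\mathbb{1}\{\rho(w^t_{L_t},w^\star)<p/4\}$ and $Z_t$, where $Z_t=0$ unless $V_t=1$ or $L_t=K$, in which case $Z_t\sim\mathrm{Ber}(f_{w^\star}(S_t))$. When the planner stops, it receives final reward $R=f_{w^\star}((w^N_i)_{i\in[k^\star]})$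 with $k^\star=\min\{8,\min\{k:\rho(w^N_k,w^\star)<p/4\}\}$. Expert oracle: partway through inputting a sequence (after a prefix whose last vector is $w$), the planner may query the oracle, which returns the index of the first coordinate where $w$ and $w^\star$ differ, or a special symbol if $w=w^\star$; it may then continue the sequence, as long as the total length stays at most $K$. A planner is sound if for every $w^\star\in W^\star$ its expected final reward $\mathbb{E}[R]$ is within $0.01$ of the maximal achievable final reward (which is at least $f_{w^\star}(())$). *)

theory Defs
  imports "HOL-Probability.Probability"
begin

(* Vectors of {+1,-1}^p are represented as bool lists of length p (True = +1). *)
type_synonym vec = "bool list"

definition cube :: "nat \<Rightarrow> vec set" where
  "cube p = {x. length x = p}"

(* Hamming distance rho(x,y) = (p - x^T y)/2 = number of differing coordinates *)
definition hdist :: "vec \<Rightarrow> vec \<Rightarrow> nat" where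
  "hdist x y = card {i. i < length x \<and> x ! i \<noteq> y ! i}"

definition ones :: "nat \<Rightarrow> vec" where
  "ones p = replicate p True"

definition gfun :: "nat \<Rightarrow> nat \<Rightarrow> real" where
  "gfun p x = 1 - real x / real p"

definition Wstar :: "nat \<Rightarrow> vec set" where
  "Wstar p = {w \<in> cube p. real p / 4 \<le> real (hdist (ones p) w) \<and> real (hdist (ones p) w) \<le> 3 * real p / 4}"

definition close :: "nat \<Rightarrow> vec \<Rightarrow> vec \<Rightarrow> bool" where
  "close p x w \<longleftrightarrow> real (hdist x w) < real p / 4"

(* ws = (w_1,...,w_k), with w_0 = ones p implicit; membership in W^{o k} with k = length ws *)
definition chain_ok :: "nat \<Rightarrow> vec list \<Rightarrow> bool" where
  "chain_ok p ws \<longleftrightarrow> set ws \<subseteq> cube p \<and>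
     (\<forall>i < length ws. real (hdist ((ones p # ws) ! i) (ws ! i)) \<ge> real p / 4)"

definition Wcirc :: "nat \<Rightarrow> nat \<Rightarrow> vec list set" where
  "Wcirc p k = {ws. length ws = k \<and> chain_ok p ws}"

definition fval :: "nat \<Rightarrow> vec \<Rightarrow> vec list \<Rightarrow> real" where
  "fval p wst ws =
     (\<Prod>i<length ws. gfun p (hdist ((ones p # ws) ! i) (ws ! i))) *
     gfun p (hdist (last (ones p # ws)) wst)"

(* k* = min{8, min{k : rho(w_k,wst) < p/4}}, with min of the empty set = infinity *)
definition kstar :: "nat \<Rightarrow> vec \<Rightarrow> vec list \<Rightarrow> nat" where
  "kstar p wst ws =
     (if \<exists>k\<in>{1..8}. close p (ws ! (k - 1)) wst
      then (LEAST k. 1 \<le> k \<and> k \<le> 8 \<and> close p (ws ! (k - 1)) wst) else 8)"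

definition final_reward :: "nat \<Rightarrow> vec \<Rightarrow> vec list \<Rightarrow> real" where
  "final_reward p wst ws = fval p wst (take (kstar p wst ws) ws)"

definition opt_reward :: "nat \<Rightarrow> vec \<Rightarrow> real" where
  "opt_reward p wst = Max (final_reward p wst ` Wcirc p 8)"

(* expert: first (0-based) differing coordinate, None = special symbol (w = wst ) *)
definition expert_answer :: "vec \<Rightarrow> vec \<Rightarrow> nat option" where
  "expert_answer wst w = (if w = wst then None else Some (LEAST i. i < length w \<and> w ! i \<noteq> wst ! i))"

datatype event =
    Ext vec
  | Qry "nat option"
  | Sub bool bool bool      (* sequence submitted (round ends), observations U_t V_t Z_t *)
  | Stp "vec list"

datatype action = AExt vec | AQry | ASub | AStop "vec list"

type_synonym planner = "event list \<Rightarrow> action pmf"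

fun cur_aux :: "vec list \<Rightarrow> event list \<Rightarrow> vec list" where
  "cur_aux acc [] = acc"
| "cur_aux acc (Ext v # h) = cur_aux (acc @ [v]) h"
| "cur_aux acc (Qry _ # h) = cur_aux acc h"
| "cur_aux acc (Sub _ _ _ # h) = cur_aux [] h"
| "cur_aux acc (Stp _ # h) = cur_aux acc h"

definition cur :: "event list \<Rightarrow> vec list" where
  "cur h = cur_aux [] h"

definition stopped :: "event list \<Rightarrow> bool" where
  "stopped h \<longleftrightarrow> (\<exists>ws. Stp ws \<in> set h)"

fun legal :: "nat \<Rightarrow> nat \<Rightarrow> event list \<Rightarrow> action \<Rightarrow> bool" where
  "legal p K h (AExt v) \<longleftrightarrow> length (cur h) < K \<and> chain_ok p (cur h @ [v])"
| "legal p K h AQry \<longleftrightarrow> True"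
| "legal p K h ASub \<longleftrightarrow> cur h \<noteq> []"
| "legal p K h (AStop ws) \<longleftrightarrow> cur h = [] \<and> ws \<in> Wcirc p 8"

definition valid_planner :: "nat \<Rightarrow> nat \<Rightarrow> planner \<Rightarrow> bool" where
  "valid_planner p K P \<longleftrightarrow> (\<forall>h. \<forall>a \<in> set_pmf (P h). legal p K h a)"

definition step :: "nat \<Rightarrow> nat \<Rightarrow> vec \<Rightarrow> planner \<Rightarrow> event list \<Rightarrow> event list pmf" where
  "step p K wst P h =
    (if stopped h then return_pmf h else
     P h \<bind> (\<lambda>a. case a of
        AExt v \<Rightarrow> return_pmf (h @ [Ext v])
      | AQry \<Rightarrow> return_pmf (h @ [Qry (expert_answer wst (last (ones p # cur h)))])
      | ASub \<Rightarrow>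
          (let s = cur h;
               U = close p ((ones p # s) ! (length s - 1)) wst;
               V = close p (last s) wst
           in if V \<or> length s = K
              then map_pmf (\<lambda>z. h @ [Sub U V z]) (bernoulli_pmf (fval p wst s))
              else return_pmf (h @ [Sub U V False]))
      | AStop ws \<Rightarrow> return_pmf (h @ [Stp ws])))"

primrec hist :: "nat \<Rightarrow> nat \<Rightarrow> vec \<Rightarrow> planner \<Rightarrow> nat \<Rightarrow> event list pmf" where
  "hist p K wst P 0 = return_pmf []"
| "hist p K wst P (Suc n) = hist p K wst P n \<bind> step p K wst P"

definition num_queries :: "event list \<Rightarrow> nat" where
  "num_queries h = length (filter (\<lambda>e. case e of Qry _ \<Rightarrow> True | _ \<Rightarrow> False) h)"

definition num_rounds :: "event list \<Rightarrow> nat" where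
  "num_rounds h = length (filter (\<lambda>e. case e of Sub _ _ _ \<Rightarrow> True | Stp _ \<Rightarrow> True | _ \<Rightarrow> False) h)"

(* lower approximation of N: if not yet stopped, at least one more action is to come *)
definition N_approx :: "event list \<Rightarrow> nat" where
  "N_approx h = num_rounds h + (if stopped h then 0 else 1)"

definition expected_N :: "nat \<Rightarrow> nat \<Rightarrow> vec \<Rightarrow> planner \<Rightarrow> ennreal" where
  "expected_N p K wst P = (SUP n. \<integral>\<^sup>+ h. ennreal (real (N_approx h)) \<partial>measure_pmf (hist p K wst P n))"

definition hist_reward :: "nat \<Rightarrow> vec \<Rightarrow> event list \<Rightarrow> real" where
  "hist_reward p wst h = (if stopped h then final_reward p wst (SOME ws. Stp ws \<in> set h) else 0)"

definition expected_R :: "nat \<Rightarrow> nat \<Rightarrow> vec \<Rightarrow> planner \<Rightarrow> real" where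
  "expected_R p K wst P =
     enn2real (SUP n. \<integral>\<^sup>+ h. ennreal (hist_reward p wst h) \<partial>measure_pmf (hist p K wst P n))"

definition sound :: "nat \<Rightarrow> nat \<Rightarrow> planner \<Rightarrow> bool" where
  "sound p K P \<longleftrightarrow> (\<forall>wst \<in> Wstar p. \<bar>expected_R p K wst P - opt_reward p wst\<bar> \<le> 0.01)"

definition query_bounded :: "nat \<Rightarrow> nat \<Rightarrow> planner \<Rightarrow> real \<Rightarrow> bool" where
  "query_bounded p K P Q \<longleftrightarrow>
     (\<forall>wst \<in> Wstar p. \<forall>n. \<forall>h \<in> set_pmf (hist p K wst P n). real (num_queries h) < Q)"

end

theory Submission
  imports Defs
begin

text \<open>
  A sound planner must, for every hidden w in W*, output a sequence containing a vector within
  distance p/4 of w: otherwise k* = 8 and its reward is at most (3/4)^8, while the optimum is at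
  least 1/4. Compare the interaction with the blind process, in which every submission is
  reported as silent (U = V = Z = 0) and every expert query gets a uniformly random answer among
  the p + 1 possible ones. The blind process does not depend on w, and on silent histories with
  at most Q queries the true law is at most (p+1)^Q times the blind one. Until the first
  informative observation the interaction is silent, and an informative observation among the
  first M submissions needs a submitted vector within distance p/4 of w or a reward coin of
  probability at most (3/4)^K. A Hamming ball of radius p/4 has at most (256/27)^(p/4) points, so
  summing over the roughly 2^p vectors of W* gives
    |W*| (0.23 - (3/4)^8) <= (p+1)^Q (256/27)^(p/4) (2M + 8) + |W*| ((3/4)^K M + E[N]/M).
  For Q = O(p / log p) and M of order E[N] this forces E[N] >= 2^(min p K / 128).
\<close>

section \<open>Iterated Markov kernels\<close>

primrec kernel_iter :: "'a \<Rightarrow> ('a \<Rightarrow> 'a pmf) \<Rightarrow> nat \<Rightarrow> 'a pmf" where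
  "kernel_iter x0 st 0 = return_pmf x0"
| "kernel_iter x0 st (Suc n) = kernel_iter x0 st n \<bind> st"

lemma nn_integral_pmf_le_const:
  fixes f :: "'a \<Rightarrow> ennreal"
  assumes "\<And>x. x \<in> set_pmf M \<Longrightarrow> f x \<le> c"
  shows "(\<integral>\<^sup>+x. f x \<partial>measure_pmf M) \<le> c"
  by (rule measure_pmf.nn_integral_le_const) (auto intro!: AE_pmfI assms)

lemma nn_integral_pmf_ge_const:
  fixes f :: "'a \<Rightarrow> ennreal"
  assumes "\<And>x. x \<in> set_pmf M \<Longrightarrow> c \<le> f x"
  shows "c \<le> (\<integral>\<^sup>+x. f x \<partial>measure_pmf M)"
proof -
  have "(\<integral>\<^sup>+x. c \<partial>measure_pmf M) \<le> (\<integral>\<^sup>+x. f x \<partial>measure_pmf M)"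
    using assms by (intro nn_integral_mono_AE) (auto intro!: AE_pmfI)
  then show ?thesis by (simp add: measure_pmf.emeasure_space_1)
qed

lemma pmf_times_le_nn_integral:
  fixes g :: "'a \<Rightarrow> ennreal"
  shows "g x * ennreal (pmf M x) \<le> (\<integral>\<^sup>+y. g y \<partial>measure_pmf M)"
proof -
  have "(\<integral>\<^sup>+y. g x * indicator {x} y \<partial>measure_pmf M) \<le> (\<integral>\<^sup>+y. g y \<partial>measure_pmf M)"
    by (intro nn_integral_mono) (auto split: split_indicator)
  then show ?thesis by (simp add: emeasure_pmf_single)
qed

lemma nn_integral_kernel_iter_le:
  fixes \<Phi> D :: "'a \<Rightarrow> ennreal" and st :: "'a \<Rightarrow> 'a pmf"
  assumes "\<And>x. (\<integral>\<^sup>+y. \<Phi> y \<partial>st x) \<le> \<Phi> x + D x"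
  shows "(\<integral>\<^sup>+x. \<Phi> x \<partial>kernel_iter x0 st n) \<le> \<Phi> x0 + (\<Sum>t<n. \<integral>\<^sup>+x. D x \<partial>kernel_iter x0 st t)"
proof (induction n)
  case 0
  then show ?case by simp
next
  case (Suc n)
  have "(\<integral>\<^sup>+x. \<Phi> x \<partial>kernel_iter x0 st (Suc n)) = (\<integral>\<^sup>+x. (\<integral>\<^sup>+y. \<Phi> y \<partial>st x) \<partial>kernel_iter x0 st n)"
    by simp
  also have "\<dots> \<le> (\<integral>\<^sup>+x. \<Phi> x + D x \<partial>kernel_iter x0 st n)"
    by (intro nn_integral_mono assms)
  also have "\<dots> = (\<integral>\<^sup>+x. \<Phi> x \<partial>kernel_iter x0 st n) + (\<integral>\<^sup>+x. D x \<partial>kernel_iter x0 st n)"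
    by (simp add: nn_integral_add)
  also have "\<dots> \<le> \<Phi> x0 + (\<Sum>t<Suc n. \<integral>\<^sup>+x. D x \<partial>kernel_iter x0 st t)"
    using Suc.IH by (simp add: add.assoc add_right_mono)
  finally show ?case .
qed

lemma nn_integral_kernel_iter_ge:
  fixes \<Phi> D :: "'a \<Rightarrow> ennreal" and st :: "'a \<Rightarrow> 'a pmf"
  assumes "\<And>x. \<Phi> x + D x \<le> (\<integral>\<^sup>+y. \<Phi> y \<partial>st x)"
  shows "\<Phi> x0 + (\<Sum>t<n. \<integral>\<^sup>+x. D x \<partial>kernel_iter x0 st t) \<le> (\<integral>\<^sup>+x. \<Phi> x \<partial>kernel_iter x0 st n)"
proof (induction n)
  case 0
  then show ?case by simp
next
  case (Suc n)
  have "\<Phi> x0 + (\<Sum>t<Suc n. \<integral>\<^sup>+x. D x \<partial>kernel_iter x0 st t)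
      \<le> (\<integral>\<^sup>+x. \<Phi> x \<partial>kernel_iter x0 st n) + (\<integral>\<^sup>+x. D x \<partial>kernel_iter x0 st n)"
    using Suc.IH by (simp add: add.assoc[symmetric] add_right_mono)
  also have "\<dots> = (\<integral>\<^sup>+x. \<Phi> x + D x \<partial>kernel_iter x0 st n)"
    by (simp add: nn_integral_add)
  also have "\<dots> \<le> (\<integral>\<^sup>+x. (\<integral>\<^sup>+y. \<Phi> y \<partial>st x) \<partial>kernel_iter x0 st n)"
    by (intro nn_integral_mono assms)
  finally show ?case by simp
qed

fun is_sub :: "event \<Rightarrow> bool" where
  "is_sub (Sub _ _ _) = True"
| "is_sub _ = False"

definition num_subs :: "event list \<Rightarrow> nat" where
  "num_subs h = length (filter is_sub h)"

fun silent_event :: "event \<Rightarrow> bool" where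
  "silent_event (Sub U V Z) = (\<not> U \<and> \<not> V \<and> \<not> Z)"
| "silent_event _ = True"

definition silent :: "event list \<Rightarrow> bool" where
  "silent h \<longleftrightarrow> (\<forall>e\<in>set h. silent_event e)"

definition answers :: "nat \<Rightarrow> nat option set" where
  "answers p = insert None (Some ` {..<p})"

fun answer_ok :: "nat \<Rightarrow> event \<Rightarrow> bool" where
  "answer_ok p (Qry a) = (a \<in> answers p)"
| "answer_ok p _ = True"

definition answers_ok :: "nat \<Rightarrow> event list \<Rightarrow> bool" where
  "answers_ok p h \<longleftrightarrow> (\<forall>e\<in>set h. answer_ok p e)"

lemma cur_aux_snoc:
  "cur_aux acc (h @ [e]) = (case e of Ext v \<Rightarrow> cur_aux acc h @ [v] | Sub _ _ _ \<Rightarrow> [] | _ \<Rightarrow> cur_aux acc h)"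
proof (induction h arbitrary: acc)
  case Nil
  then show ?case by (cases e) auto
next
  case (Cons a h)
  then show ?case by (cases a; cases e) auto
qed

lemma cur_snoc: "cur (h @ [e]) = (case e of Ext v \<Rightarrow> cur h @ [v] | Sub _ _ _ \<Rightarrow> [] | _ \<Rightarrow> cur h)"
  unfolding cur_def by (rule cur_aux_snoc)

lemma num_queries_snoc: "num_queries (h @ [e]) = num_queries h + (case e of Qry _ \<Rightarrow> 1 | _ \<Rightarrow> 0)"
  unfolding num_queries_def by (cases e) auto

lemma num_subs_snoc: "num_subs (h @ [e]) = num_subs h + (if is_sub e then 1 else 0)"
  unfolding num_subs_def by auto

lemma num_subs_Cons: "num_subs (e # h) = (if is_sub e then Suc (num_subs h) else num_subs h)"
  by (simp add: num_subs_def)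

lemma num_subs_le_num_rounds: "num_subs h \<le> num_rounds h"
  unfolding num_subs_def num_rounds_def by (induction h) (auto split: event.splits)

lemma silent_snoc [simp]: "silent (h @ [e]) \<longleftrightarrow> silent h \<and> silent_event e"
  by (auto simp: silent_def)

lemma answers_ok_snoc [simp]: "answers_ok p (h @ [e]) \<longleftrightarrow> answers_ok p h \<and> answer_ok p e"
  by (auto simp: answers_ok_def)

lemma silent_event_if_not_sub: "\<not> is_sub e \<Longrightarrow> silent_event e"
  by (cases e) auto

lemma card_answers: "card (answers p) = p + 1"
  unfolding answers_def by (simp add: card_image)

lemma expert_answer_in_answers:
  assumes "length x = p" "length y = p"
  shows "expert_answer y x \<in> answers p"
proof (cases "x = y")
  case True
  then show ?thesis by (simp add: expert_answer_def answers_def)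
next
  case False
  have ex: "\<exists>i. i < length x \<and> x ! i \<noteq> y ! i"
  proof (rule ccontr)
    assume "\<not> ?thesis"
    then have "x = y" using assms by (intro nth_equalityI) auto
    with False show False ..
  qed
  have "(LEAST i. i < length x \<and> x ! i \<noteq> y ! i) < length x"
    using LeastI_ex[OF ex] by blast
  then show ?thesis using False assms by (simp add: expert_answer_def answers_def)
qed

definition step_kernel :: "nat \<Rightarrow> nat \<Rightarrow> vec \<Rightarrow> event list \<Rightarrow> action \<Rightarrow> event list pmf" where
  "step_kernel p K w h = (\<lambda>a. case a of
        AExt v \<Rightarrow> return_pmf (h @ [Ext v])
      | AQry \<Rightarrow> return_pmf (h @ [Qry (expert_answer w (last (ones p # cur h)))])
      | ASub \<Rightarrow>
          (let s = cur h;
               U = close p ((ones p # s) ! (length s - 1)) w;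
               V = close p (last s) w
           in if V \<or> length s = K
              then map_pmf (\<lambda>z. h @ [Sub U V z]) (bernoulli_pmf (fval p w s))
              else return_pmf (h @ [Sub U V False]))
      | AStop ws \<Rightarrow> return_pmf (h @ [Stp ws]))"

lemma step_eq: "\<not> stopped h \<Longrightarrow> step p K w P h = P h \<bind> step_kernel p K w h"
  unfolding step_def step_kernel_def by simp

lemma step_stopped [simp]: "stopped h \<Longrightarrow> step p K w P h = return_pmf h"
  by (simp add: step_def)

lemma hist_eq_kernel_iter: "hist p K w P n = kernel_iter [] (step p K w P) n"
  by (induction n) auto

definition blind_kernel :: "nat \<Rightarrow> event list \<Rightarrow> action \<Rightarrow> event list pmf" where
  "blind_kernel p h = (\<lambda>a. case a of
        AExt v \<Rightarrow> return_pmf (h @ [Ext v])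
      | AQry \<Rightarrow> map_pmf (\<lambda>x. h @ [Qry x]) (pmf_of_set (answers p))
      | ASub \<Rightarrow> return_pmf (h @ [Sub False False False])
      | AStop ws \<Rightarrow> return_pmf (h @ [Stp ws]))"

definition blind_step :: "nat \<Rightarrow> planner \<Rightarrow> event list \<Rightarrow> event list pmf" where
  "blind_step p P h = (if stopped h then return_pmf h else P h \<bind> blind_kernel p h)"

lemma set_pmf_step_kernel:
  assumes "h' \<in> set_pmf (step_kernel p K w h a)"
  shows "\<exists>e. h' = h @ [e] \<and> (is_sub e \<longleftrightarrow> a = ASub)"
proof (cases a)
  case ASub
  with assms obtain U V z where "h' = h @ [Sub U V z]"
    by (auto simp: step_kernel_def Let_def split: if_splits)
  with ASub show ?thesis by auto
qed (use assms in \<open>auto simp: step_kernel_def\<close>)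

lemma set_pmf_blind_kernel:
  assumes "h' \<in> set_pmf (blind_kernel p h a)"
  shows "\<exists>e. h' = h @ [e] \<and> (is_sub e \<longleftrightarrow> a = ASub)"
  using assms by (cases a) (auto simp: blind_kernel_def answers_def)

lemma set_pmf_step: "h' \<in> set_pmf (step p K w P h) \<Longrightarrow> h' = h \<or> (\<exists>e. h' = h @ [e])"
  by (cases "stopped h") (auto simp: step_eq dest: set_pmf_step_kernel)

definition wf_hist :: "nat \<Rightarrow> event list \<Rightarrow> bool" where
  "wf_hist p h \<longleftrightarrow> chain_ok p (cur h) \<and> answers_ok p h \<and> (\<forall>ws. Stp ws \<in> set h \<longrightarrow> ws \<in> Wcirc p 8)"

lemma ones_in_cube [simp]: "ones p \<in> cube p"
  by (simp add: ones_def cube_def)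

lemma chain_ok_Nil [simp]: "chain_ok p []"
  by (simp add: chain_ok_def)

lemma nth_ones_Cons_in_cube: "i \<le> length ws \<Longrightarrow> set ws \<subseteq> cube p \<Longrightarrow> (ones p # ws) ! i \<in> cube p"
  by (cases i) auto

lemma last_ones_Cons_in_cube: "set ws \<subseteq> cube p \<Longrightarrow> last (ones p # ws) \<in> cube p"
  by (cases ws) auto

lemma wf_hist_step:
  assumes wf: "wf_hist p h" and valid: "valid_planner p K P" and w: "w \<in> cube p"
    and h': "h' \<in> set_pmf (step p K w P h)"
  shows "wf_hist p h'"
proof (cases "stopped h")
  case True
  with wf h' show ?thesis by simp
next
  case False
  with h' obtain a where a: "a \<in> set_pmf (P h)" and h'a: "h' \<in> set_pmf (step_kernel p K w h a)"
    by (auto simp: step_eq)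
  have legal: "legal p K h a"
    using a valid by (auto simp: valid_planner_def)
  show ?thesis
  proof (cases a)
    case AQry
    have "last (ones p # cur h) \<in> cube p"
      using wf by (intro last_ones_Cons_in_cube) (simp add: wf_hist_def chain_ok_def)
    then have "expert_answer w (last (ones p # cur h)) \<in> answers p"
      using w by (intro expert_answer_in_answers) (auto simp: cube_def)
    with h'a AQry wf show ?thesis
      by (auto simp: step_kernel_def wf_hist_def cur_snoc simp del: last.simps)
  next
    case ASub
    with h'a wf show ?thesis
      by (auto simp: step_kernel_def wf_hist_def cur_snoc Let_def split: if_splits)
  qed (use h'a legal wf in \<open>auto simp: step_kernel_def wf_hist_def cur_snoc\<close>)
qed

lemma wf_hist_hist:
  assumes "valid_planner p K P" "w \<in> cube p" "h \<in> set_pmf (hist p K w P n)"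
  shows "wf_hist p h"
  using assms(3)
proof (induction n arbitrary: h)
  case 0
  then show ?case by (simp add: wf_hist_def answers_ok_def cur_def)
next
  case (Suc n)
  then obtain h0 where "h0 \<in> set_pmf (hist p K w P n)" "h \<in> set_pmf (step p K w P h0)"
    by auto
  with Suc.IH assms(1,2) show ?case by (blast intro: wf_hist_step)
qed

section \<open>Change of measure to the blind process\<close>

text \<open>
  An expert answer has probability 1/(p+1) under the blind process, so on silent histories the
  true law is at most (p+1)^(number of queries) times the blind law.
\<close>

abbreviation query_weight :: "nat \<Rightarrow> event list \<Rightarrow> ennreal" where
  "query_weight p h \<equiv> of_nat ((p + 1) ^ num_queries h)"

lemma query_weight_le_uniform_answer:
  fixes F :: "event list \<Rightarrow> ennreal"
  assumes a: "a \<in> answers p"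
  shows "query_weight p h * F (h @ [Qry a])
    \<le> (\<integral>\<^sup>+x. query_weight p (h @ [Qry x]) * F (h @ [Qry x]) \<partial>pmf_of_set (answers p))"
proof -
  have fin: "finite (answers p)" "answers p \<noteq> {}"
    by (auto simp: answers_def)
  have weight: "query_weight p (h @ [Qry a]) = of_nat (p + 1) * query_weight p h"
    by (simp only: num_queries_snoc event.case Suc_eq_plus1[symmetric] power_Suc of_nat_mult)
  have prob: "pmf (pmf_of_set (answers p)) a = 1 / real (p + 1)"
    using a fin by (simp add: card_answers)
  have one: "of_nat (p + 1) * ennreal (1 / real (p + 1)) = 1"
    by (simp add: ennreal_of_nat_eq_real_of_nat ennreal_mult'[symmetric] del: of_nat_Suc)
  have "query_weight p (h @ [Qry a]) * F (h @ [Qry a]) * ennreal (pmf (pmf_of_set (answers p)) a)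
      = query_weight p h * F (h @ [Qry a]) * (of_nat (p + 1) * ennreal (1 / real (p + 1)))"
    unfolding weight prob by (simp only: ac_simps)
  then have "query_weight p h * F (h @ [Qry a])
      = query_weight p (h @ [Qry a]) * F (h @ [Qry a]) * ennreal (pmf (pmf_of_set (answers p)) a)"
    by (simp only: one mult_1_right)
  also have "\<dots> \<le> (\<integral>\<^sup>+x. query_weight p (h @ [Qry x]) * F (h @ [Qry x]) \<partial>pmf_of_set (answers p))"
    by (rule pmf_times_le_nn_integral)
  finally show ?thesis .
qed

lemma step_kernel_le_blind_kernel:
  fixes F :: "event list \<Rightarrow> ennreal"
  assumes F0: "\<And>h. \<not> (silent h \<and> answers_ok p h) \<Longrightarrow> F h = 0"
  shows "query_weight p h * (\<integral>\<^sup>+h'. F h' \<partial>step_kernel p K w h a)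
    \<le> (\<integral>\<^sup>+h'. query_weight p h' * F h' \<partial>blind_kernel p h a)"
proof (cases a)
  case AQry
  define a0 where "a0 = expert_answer w (last (ones p # cur h))"
  have "(\<integral>\<^sup>+h'. F h' \<partial>step_kernel p K w h a) = F (h @ [Qry a0])"
    by (simp add: step_kernel_def AQry a0_def)
  moreover have "query_weight p h * F (h @ [Qry a0])
      \<le> (\<integral>\<^sup>+h'. query_weight p h' * F h' \<partial>blind_kernel p h a)"
  proof (cases "a0 \<in> answers p")
    case True
    then show ?thesis
      using query_weight_le_uniform_answer[of a0 p h F] by (simp add: blind_kernel_def AQry)
  qed (simp add: F0)
  ultimately show ?thesis by simp
next
  case ASub
  have "(\<integral>\<^sup>+h'. F h' \<partial>step_kernel p K w h a) \<le> F (h @ [Sub False False False])"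
  proof (rule nn_integral_pmf_le_const)
    fix h' assume "h' \<in> set_pmf (step_kernel p K w h a)"
    then obtain U V z where h': "h' = h @ [Sub U V z]"
      by (auto simp: step_kernel_def ASub Let_def split: if_splits)
    show "F h' \<le> F (h @ [Sub False False False])"
      using F0[of h'] by (cases "U \<or> V \<or> z") (auto simp: h')
  qed
  then show ?thesis
    by (simp add: blind_kernel_def ASub num_queries_snoc mult_left_mono)
qed (simp_all add: step_kernel_def blind_kernel_def num_queries_snoc)

lemma step_le_blind_step:
  fixes F :: "event list \<Rightarrow> ennreal"
  assumes "\<And>h. \<not> (silent h \<and> answers_ok p h) \<Longrightarrow> F h = 0"
  shows "query_weight p h * (\<integral>\<^sup>+h'. F h' \<partial>step p K w P h)
    \<le> (\<integral>\<^sup>+h'. query_weight p h' * F h' \<partial>blind_step p P h)"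
proof (cases "stopped h")
  case False
  have "query_weight p h * (\<integral>\<^sup>+h'. F h' \<partial>step p K w P h)
      = (\<integral>\<^sup>+a. query_weight p h * (\<integral>\<^sup>+h'. F h' \<partial>step_kernel p K w h a) \<partial>P h)"
    using False by (simp add: step_eq nn_integral_cmult)
  also have "\<dots> \<le> (\<integral>\<^sup>+a. (\<integral>\<^sup>+h'. query_weight p h' * F h' \<partial>blind_kernel p h a) \<partial>P h)"
    by (intro nn_integral_mono step_kernel_le_blind_kernel assms)
  also have "\<dots> = (\<integral>\<^sup>+h'. query_weight p h' * F h' \<partial>blind_step p P h)"
    using False by (simp add: blind_step_def)
  finally show ?thesis .
qed (simp add: blind_step_def)

lemma hist_le_blind:
  fixes F :: "event list \<Rightarrow> ennreal"
  assumes "\<And>h. \<not> (silent h \<and> answers_ok p h) \<Longrightarrow> F h = 0"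
  shows "(\<integral>\<^sup>+h. F h \<partial>hist p K w P n)
    \<le> (\<integral>\<^sup>+h. query_weight p h * F h \<partial>kernel_iter [] (blind_step p P) n)"
  using assms
proof (induction n arbitrary: F)
  case 0
  then show ?case by (simp add: num_queries_def)
next
  case (Suc n)
  define G where "G h = (\<integral>\<^sup>+h'. F h' \<partial>step p K w P h)" for h
  have "G h = 0" if "\<not> (silent h \<and> answers_ok p h)" for h
  proof -
    have "G h = (\<integral>\<^sup>+h'. 0 \<partial>step p K w P h)"
      unfolding G_def
      by (intro nn_integral_cong_AE AE_pmfI) (use Suc.prems that in \<open>auto dest!: set_pmf_step\<close>)
    then show ?thesis by simp
  qed
  then have "(\<integral>\<^sup>+h. G h \<partial>hist p K w P n)
      \<le> (\<integral>\<^sup>+h. query_weight p h * G h \<partial>kernel_iter [] (blind_step p P) n)"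
    by (rule Suc.IH)
  also have "\<dots> \<le> (\<integral>\<^sup>+h. (\<integral>\<^sup>+h'. query_weight p h' * F h' \<partial>blind_step p P h)
      \<partial>kernel_iter [] (blind_step p P) n)"
    unfolding G_def by (intro nn_integral_mono step_le_blind_step Suc.prems)
  finally show ?case by (simp add: G_def)
qed

lemma hist_le_blind_bounded_queries:
  fixes F :: "event list \<Rightarrow> ennreal"
  assumes F0: "\<And>h. \<not> (silent h \<and> answers_ok p h \<and> num_queries h \<le> Q) \<Longrightarrow> F h = 0"
  shows "(\<integral>\<^sup>+h. F h \<partial>hist p K w P n)
    \<le> of_nat ((p + 1) ^ Q) * (\<integral>\<^sup>+h. F h \<partial>kernel_iter [] (blind_step p P) n)"
proof -
  have "query_weight p h * F h \<le> of_nat ((p + 1) ^ Q) * F h" for h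
  proof (cases "num_queries h \<le> Q")
    case True
    then have "query_weight p h \<le> of_nat ((p + 1) ^ Q)"
      by (simp only: of_nat_le_iff) (intro power_increasing, auto)
    then show ?thesis by (rule mult_right_mono) simp
  qed (simp add: F0)
  then have "(\<integral>\<^sup>+h. query_weight p h * F h \<partial>kernel_iter [] (blind_step p P) n)
      \<le> (\<integral>\<^sup>+h. of_nat ((p + 1) ^ Q) * F h \<partial>kernel_iter [] (blind_step p P) n)"
    by (intro nn_integral_mono)
  also have "\<dots> = of_nat ((p + 1) ^ Q) * (\<integral>\<^sup>+h. F h \<partial>kernel_iter [] (blind_step p P) n)"
    by (simp add: nn_integral_cmult)
  finally show ?thesis
    using hist_le_blind[of p F K w P n] F0 by (meson order_trans)
qed

section \<open>Counting submissions\<close>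

definition capped_sub_prob :: "nat \<Rightarrow> planner \<Rightarrow> event list \<Rightarrow> ennreal" where
  "capped_sub_prob M P h = (if num_subs h < M \<and> \<not> stopped h then ennreal (pmf (P h) ASub) else 0)"

text \<open>
  The potential min (num_subs h) M never exceeds M, and each step raises its expectation by at
  least capped_sub_prob.
\<close>

lemma capped_num_subs_increment:
  fixes kern :: "action \<Rightarrow> event list pmf" and st :: "event list pmf"
  assumes st: "\<not> stopped h \<Longrightarrow> st = P h \<bind> kern"
    and stopped: "stopped h \<Longrightarrow> st = return_pmf h"
    and kern: "\<And>a h'. h' \<in> set_pmf (kern a) \<Longrightarrow> \<exists>e. h' = h @ [e] \<and> (is_sub e \<longleftrightarrow> a = ASub)"
  shows "of_nat (min (num_subs h) M) + capped_sub_prob M P h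
    \<le> (\<integral>\<^sup>+h'. of_nat (min (num_subs h') M) \<partial>st)"
proof (cases "stopped h")
  case False
  define c :: ennreal where "c = of_bool (num_subs h < M)"
  have pointwise: "of_nat (min (num_subs h) M) + c * indicator {ASub} a
      \<le> (\<integral>\<^sup>+h'. of_nat (min (num_subs h') M) \<partial>kern a)" for a
  proof (rule nn_integral_pmf_ge_const)
    fix h' assume "h' \<in> set_pmf (kern a)"
    then obtain e where "h' = h @ [e]" "is_sub e \<longleftrightarrow> a = ASub"
      using kern by blast
    then show "of_nat (min (num_subs h) M) + c * indicator {ASub} a \<le> of_nat (min (num_subs h') M)"
      by (cases "a = ASub") (auto simp: c_def num_subs_snoc)
  qed
  have "of_nat (min (num_subs h) M) + capped_sub_prob M P h
      = (\<integral>\<^sup>+a. of_nat (min (num_subs h) M) + c * indicator {ASub} a \<partial>P h)"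
    using False
    by (simp add: nn_integral_add measure_pmf.emeasure_space_1 emeasure_pmf_single capped_sub_prob_def c_def)
  also have "\<dots> \<le> (\<integral>\<^sup>+a. (\<integral>\<^sup>+h'. of_nat (min (num_subs h') M) \<partial>kern a) \<partial>P h)"
    by (intro nn_integral_mono pointwise)
  also have "\<dots> = (\<integral>\<^sup>+h'. of_nat (min (num_subs h') M) \<partial>st)"
    using st False by simp
  finally show ?thesis .
qed (use stopped in \<open>simp add: capped_sub_prob_def\<close>)

lemma sum_capped_sub_prob_le:
  fixes st :: "event list \<Rightarrow> event list pmf"
  assumes "\<And>h. of_nat (min (num_subs h) M) + capped_sub_prob M P h
    \<le> (\<integral>\<^sup>+h'. of_nat (min (num_subs h') M) \<partial>st h)"
  shows "(\<Sum>t<n. \<integral>\<^sup>+h. capped_sub_prob M P h \<partial>kernel_iter [] st t) \<le> of_nat M"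
proof -
  have "of_nat (min (num_subs []) M) + (\<Sum>t<n. \<integral>\<^sup>+h. capped_sub_prob M P h \<partial>kernel_iter [] st t)
      \<le> (\<integral>\<^sup>+h. of_nat (min (num_subs h) M) \<partial>kernel_iter [] st n)"
    by (rule nn_integral_kernel_iter_ge) (rule assms)
  also have "\<dots> \<le> of_nat M"
    by (rule nn_integral_pmf_le_const) simp
  finally show ?thesis by (simp add: num_subs_def)
qed

lemma sum_capped_sub_prob_hist: "(\<Sum>t<n. \<integral>\<^sup>+h. capped_sub_prob M P h \<partial>hist p K w P t) \<le> of_nat M"
  unfolding hist_eq_kernel_iter
  by (intro sum_capped_sub_prob_le capped_num_subs_increment[where kern = "step_kernel p K w _"])
     (auto simp: step_eq dest: set_pmf_step_kernel)

lemma sum_capped_sub_prob_blind: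
  "(\<Sum>t<n. \<integral>\<^sup>+h. capped_sub_prob M P h \<partial>kernel_iter [] (blind_step p P) t) \<le> of_nat M"
  by (intro sum_capped_sub_prob_le capped_num_subs_increment[where kern = "blind_kernel p _"])
     (auto simp: blind_step_def dest: set_pmf_blind_kernel)

section \<open>Hamming balls\<close>

definition ball_size :: "nat \<Rightarrow> nat" where
  "ball_size p = card {A. A \<subseteq> {..<p} \<and> 4 * card A < p}"

lemma cube_eq_lists: "cube p = {xs. set xs \<subseteq> (UNIV :: bool set) \<and> length xs = p}"
  by (auto simp: cube_def)

lemma finite_cube: "finite (cube p)"
  unfolding cube_eq_lists by (rule finite_lists_length_eq) simp

lemma card_cube: "card (cube p) = 2 ^ p"
  unfolding cube_eq_lists using card_lists_length_eq[of "UNIV :: bool set" p]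
  by (simp add: card_UNIV_bool)

lemma close_iff: "close p x w \<longleftrightarrow> 4 * hdist x w < p"
proof -
  have "close p x w \<longleftrightarrow> real (4 * hdist x w) < real p"
    by (simp add: close_def field_simps)
  then show ?thesis by (simp only: of_nat_less_iff)
qed

lemma hdist_le_length: "hdist x y \<le> length x"
  unfolding hdist_def by (rule order_trans[OF card_mono[OF finite_lessThan]]) auto

text \<open>A vector close to x is determined by the set of coordinates where it differs from x.\<close>

lemma card_close_le_ball_size:
  assumes x: "x \<in> cube p"
  shows "card {w \<in> cube p. close p x w} \<le> ball_size p"
proof -
  define diff where "diff w = {i. i < p \<and> x ! i \<noteq> w ! i}" for w :: vec
  have hdist: "hdist x w = card (diff w)" for w
    using x by (simp add: hdist_def diff_def cube_def)
  have "inj_on diff {w \<in> cube p. close p x w}"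
  proof (rule inj_onI)
    fix w1 w2
    assume w: "w1 \<in> {w \<in> cube p. close p x w}" "w2 \<in> {w \<in> cube p. close p x w}"
      and eq: "diff w1 = diff w2"
    show "w1 = w2"
    proof (rule nth_equalityI)
      show "length w1 = length w2"
        using w by (simp add: cube_def)
      fix i assume "i < length w1"
      then have "i < p"
        using w by (simp add: cube_def)
      then have "(x ! i \<noteq> w1 ! i) = (x ! i \<noteq> w2 ! i)"
        using eq unfolding diff_def by blast
      then show "w1 ! i = w2 ! i" by auto
    qed
  qed
  moreover have "diff ` {w \<in> cube p. close p x w} \<subseteq> {A. A \<subseteq> {..<p} \<and> 4 * card A < p}"
  proof
    fix A assume "A \<in> diff ` {w \<in> cube p. close p x w}"
    then obtain w where "close p x w" "A = diff w" by auto
    then show "A \<in> {A. A \<subseteq> {..<p} \<and> 4 * card A < p}"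
      using hdist[of w] by (auto simp: diff_def close_iff)
  qed
  moreover have "finite {A. A \<subseteq> {..<p} \<and> 4 * card A < p}"
    by (rule finite_subset[of _ "Pow {..<p}"]) auto
  ultimately show ?thesis
    unfolding ball_size_def by (rule card_inj_on_le)
qed

lemma sum_close_le_ball_size:
  assumes "finite S" "S \<subseteq> cube p" "x \<in> cube p"
  shows "(\<Sum>w\<in>S. of_bool (close p x w) :: ennreal) \<le> of_nat (ball_size p)"
proof -
  have "card (S \<inter> {w. close p x w}) \<le> card {w \<in> cube p. close p x w}"
    using assms(2) by (intro card_mono) (auto intro: finite_subset[OF _ finite_cube])
  also have "\<dots> \<le> ball_size p"
    by (rule card_close_le_ball_size[OF assms(3)])
  finally show ?thesis
    using assms(1) by simp
qed

lemma ball_size_le: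
  assumes "p = 4 * j"
  shows "real (ball_size p) \<le> (256/27) ^ j"
proof -
  have ball: "{A. A \<subseteq> {..<p} \<and> 4 * card A < p} = (\<Union>k<j. {A. A \<subseteq> {..<p} \<and> card A = k})"
    using assms by auto
  have "ball_size p \<le> (\<Sum>k<j. card {A. A \<subseteq> {..<p} \<and> card A = k})"
    unfolding ball_size_def ball by (rule card_UN_le) simp
  then have "real (ball_size p) \<le> (\<Sum>k<j. real (p choose k))"
    by (simp add: n_subsets flip: of_nat_sum)
  also have "\<dots> \<le> (\<Sum>k<j. real (p choose k) * (3 ^ j * (1/3) ^ k))"
  proof (intro sum_mono)
    fix k assume "k \<in> {..<j}"
    then have "(3::real) ^ k \<le> 3 ^ j"
      by (intro power_increasing) auto
    then have "1 \<le> (3::real) ^ j * (1/3) ^ k"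
      by (simp add: field_simps power_divide)
    then show "real (p choose k) \<le> real (p choose k) * (3 ^ j * (1/3) ^ k)"
      by (simp add: mult_le_cancel_left1)
  qed
  also have "\<dots> = 3 ^ j * (\<Sum>k<j. real (p choose k) * (1/3) ^ k)"
    by (simp add: sum_distrib_left mult_ac)
  also have "\<dots> \<le> 3 ^ j * (\<Sum>k\<le>p. real (p choose k) * (1/3) ^ k)"
    using assms by (intro mult_left_mono sum_mono2) auto
  also have "\<dots> = 3 ^ j * (1/3 + 1) ^ p"
    by (subst binomial_ring) simp
  also have "\<dots> = (3 * (4/3) ^ 4) ^ j"
    using assms by (simp add: power_mult power_mult_distrib)
  also have "(3::real) * (4/3) ^ 4 = 256/27"
    by (simp add: power_divide)
  finally show ?thesis .
qed

lemma hdist_ones_plus_hdist_zeros: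
  assumes "w \<in> cube p"
  shows "hdist (ones p) w + hdist (replicate p False) w = p"
proof -
  have "{i. i < length (ones p) \<and> ones p ! i \<noteq> w ! i} = {i. i < p \<and> \<not> w ! i}"
    by (auto simp: ones_def)
  then have "hdist (ones p) w = card {i. i < p \<and> \<not> w ! i}"
    by (simp add: hdist_def)
  moreover have "{i. i < length (replicate p False) \<and> replicate p False ! i \<noteq> w ! i} = {i. i < p \<and> w ! i}"
    by auto
  then have "hdist (replicate p False) w = card {i. i < p \<and> w ! i}"
    by (simp add: hdist_def)
  moreover have "{i. i < p \<and> \<not> w ! i} \<union> {i. i < p \<and> w ! i} = {..<p}"
    by auto
  then have "card {i. i < p \<and> \<not> w ! i} + card {i. i < p \<and> w ! i} = p"
    by (subst card_Un_disjoint[symmetric]) auto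
  ultimately show ?thesis by simp
qed

text \<open>W* contains every vector that is far from both the all-ones and the all-zeros vector.\<close>

lemma card_Wstar_ge: "real (2 ^ p) - 2 * real (ball_size p) \<le> real (card (Wstar p))"
proof -
  define B1 where "B1 = {w \<in> cube p. close p (ones p) w}"
  define B0 where "B0 = {w \<in> cube p. close p (replicate p False) w}"
  have "cube p - (B1 \<union> B0) \<subseteq> Wstar p"
  proof
    fix w assume w: "w \<in> cube p - (B1 \<union> B0)"
    then have "real (hdist (ones p) w) + real (hdist (replicate p False) w) = real p"
      using hdist_ones_plus_hdist_zeros by (metis DiffD1 of_nat_add)
    with w show "w \<in> Wstar p"
      by (simp add: Wstar_def close_def B1_def B0_def) linarith
  qed
  then have "card (cube p - (B1 \<union> B0)) \<le> card (Wstar p)"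
    by (intro card_mono) (auto simp: Wstar_def intro: finite_subset[OF _ finite_cube])
  moreover have "card (cube p - (B1 \<union> B0)) = card (cube p) - card (B1 \<union> B0)"
    by (rule card_Diff_subset) (auto simp: B1_def B0_def intro: finite_subset[OF _ finite_cube])
  moreover have "card (B1 \<union> B0) \<le> card B1 + card B0"
    by (rule card_Un_le)
  moreover have "card B1 \<le> ball_size p"
    unfolding B1_def by (rule card_close_le_ball_size) simp
  moreover have "card B0 \<le> ball_size p"
    unfolding B0_def by (rule card_close_le_ball_size) (simp add: cube_def)
  ultimately show ?thesis
    using card_cube[of p] by linarith
qed

section \<open>Rewards\<close>

lemma gfun_bounds: "d \<le> p \<Longrightarrow> 0 \<le> gfun p d \<and> gfun p d \<le> 1"
  by (cases "p = 0") (auto simp: gfun_def field_simps)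

lemma gfun_le_three_quarters: "0 < p \<Longrightarrow> real p / 4 \<le> real d \<Longrightarrow> gfun p d \<le> 3/4"
  by (auto simp: gfun_def field_simps)

lemma fval_bounds:
  assumes chain: "chain_ok p ws" and p: "0 < p"
  shows "0 \<le> fval p w ws \<and> fval p w ws \<le> (3/4) ^ length ws"
proof -
  define f where "f i = gfun p (hdist ((ones p # ws) ! i) (ws ! i))" for i
  define g where "g = gfun p (hdist (last (ones p # ws)) w)"
  have cube: "set ws \<subseteq> cube p"
    using chain by (simp add: chain_ok_def)
  have f: "0 \<le> f i \<and> f i \<le> 3/4" if "i < length ws" for i
  proof -
    have "(ones p # ws) ! i \<in> cube p"
      using that cube by (intro nth_ones_Cons_in_cube) auto
    then have "hdist ((ones p # ws) ! i) (ws ! i) \<le> p"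
      by (metis hdist_le_length cube_def mem_Collect_eq)
    moreover have "real p / 4 \<le> real (hdist ((ones p # ws) ! i) (ws ! i))"
      using chain that by (simp add: chain_ok_def)
    ultimately show ?thesis
      unfolding f_def using gfun_bounds gfun_le_three_quarters p by blast
  qed
  have "last (ones p # ws) \<in> cube p"
    using cube by (rule last_ones_Cons_in_cube)
  then have g: "0 \<le> g \<and> g \<le> 1"
    unfolding g_def by (intro gfun_bounds) (metis hdist_le_length cube_def mem_Collect_eq)
  have "0 \<le> (\<Prod>i<length ws. f i)" "(\<Prod>i<length ws. f i) \<le> (3/4) ^ length ws"
    using f prod_mono[of "{..<length ws}" f "\<lambda>_. 3/4"] by (auto intro: prod_nonneg)
  moreover have "fval p w ws = (\<Prod>i<length ws. f i) * g"
    by (simp add: fval_def f_def g_def)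
  ultimately show ?thesis
    using g by (auto intro: mult_nonneg_nonneg order_trans[OF mult_left_le])
qed

lemma chain_ok_take:
  assumes "chain_ok p ws"
  shows "chain_ok p (take m ws)"
proof -
  have "(ones p # take m ws) ! i = (ones p # ws) ! i" if "i < m" for i
    using that by (cases i) auto
  with assms show ?thesis
    by (auto simp: chain_ok_def dest: in_set_takeD)
qed

definition out_seq :: "event list \<Rightarrow> vec list" where
  "out_seq h = (SOME ws. Stp ws \<in> set h)"

lemma Stp_out_seq: "stopped h \<Longrightarrow> Stp (out_seq h) \<in> set h"
  unfolding stopped_def out_seq_def by (rule someI_ex)

definition output_close :: "nat \<Rightarrow> vec \<Rightarrow> event list \<Rightarrow> bool" where
  "output_close p w h \<longleftrightarrow> stopped h \<and> (\<exists>k<8. close p (out_seq h ! k) w)"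

text \<open>
  If no output vector is close to w, then k* = 8 and all eight factors of the product are at
  most 3/4.
\<close>

lemma hist_reward_le:
  assumes wf: "wf_hist p h" and p: "0 < p"
  shows "hist_reward p w h \<le> of_bool (output_close p w h) + (3/4) ^ 8"
proof (cases "stopped h")
  case True
  define ws where "ws = out_seq h"
  have "ws \<in> Wcirc p 8"
    using wf True Stp_out_seq by (auto simp: wf_hist_def ws_def)
  then have ws: "chain_ok p ws" "length ws = 8"
    by (auto simp: Wcirc_def)
  have fval_take: "fval p w (take m ws) \<le> (3/4) ^ min 8 m" for m
    using fval_bounds[OF chain_ok_take[OF ws(1), of m] p, of w] ws(2) by simp
  have reward: "hist_reward p w h = fval p w (take (kstar p w ws) ws)"
    using True by (simp add: hist_reward_def final_reward_def ws_def out_seq_def)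
  show ?thesis
  proof (cases "\<exists>k\<in>{1..8}. close p (ws ! (k - 1)) w")
    case True
    then have "output_close p w h"
      using \<open>stopped h\<close> by (force simp: output_close_def ws_def)
    moreover have "(3/4::real) ^ min 8 (kstar p w ws) \<le> 1"
      by (rule power_le_one) auto
    ultimately show ?thesis
      using reward fval_take[of "kstar p w ws"] by (simp add: add_increasing2)
  next
    case False
    then have "kstar p w ws = 8"
      by (simp add: kstar_def)
    then show ?thesis
      using reward fval_take[of 8] by simp
  qed
qed (simp add: hist_reward_def)

lemma finite_Wcirc: "finite (Wcirc p k)"
proof -
  have "Wcirc p k \<subseteq> {xs. set xs \<subseteq> cube p \<and> length xs = k}"
    by (auto simp: Wcirc_def chain_ok_def)
  then show ?thesis
    using finite_lists_length_eq[OF finite_cube] finite_subset by blast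
qed

lemma hdist_map_Not: "hdist x (map Not x) = length x" "hdist (map Not x) x = length x"
proof -
  have "{i. i < length x \<and> x ! i \<noteq> map Not x ! i} = {..<length x}"
    "{i. i < length (map Not x) \<and> map Not x ! i \<noteq> x ! i} = {..<length x}"
    by auto
  then show "hdist x (map Not x) = length x" "hdist (map Not x) x = length x"
    by (simp_all add: hdist_def)
qed

definition alternating_seq :: "vec \<Rightarrow> vec list" where
  "alternating_seq w = [w, map Not w, w, map Not w, w, map Not w, w, map Not w]"

lemma alternating_seq_in_Wcirc:
  assumes "w \<in> Wstar p"
  shows "alternating_seq w \<in> Wcirc p 8"
proof -
  have w: "w \<in> cube p" "real p / 4 \<le> real (hdist (ones p) w)"
    using assms by (auto simp: Wstar_def)
  then have v: "map Not w \<in> cube p" "hdist w (map Not w) = p" "hdist (map Not w) w = p"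
    by (simp_all add: cube_def hdist_map_Not)
  have "real p / 4 \<le> real (hdist ((ones p # alternating_seq w) ! i) (alternating_seq w ! i))"
    if "i < 8" for i
  proof -
    have "i \<in> {0, 1, 2, 3, 4, 5, 6, 7}"
      using that by auto
    then show ?thesis
      using w v by (auto simp: alternating_seq_def)
  qed
  then show ?thesis
    using w v by (simp add: Wcirc_def chain_ok_def alternating_seq_def)
qed

text \<open>
  The alternating sequence starts at w itself, so k* = 1 and its reward is g(rho(1, w)), which is
  at least 1/4 on W*.
\<close>

lemma opt_reward_ge_quarter:
  assumes w: "w \<in> Wstar p" and p: "0 < p"
  shows "1/4 \<le> opt_reward p w"
proof -
  define ws where "ws = alternating_seq w"
  have close: "close p w w"
    using p by (simp add: close_def hdist_def)
  then have "\<exists>k\<in>{1..8}. close p (ws ! (k - 1)) w"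
    by (auto simp: ws_def alternating_seq_def intro!: bexI[of _ 1])
  moreover have "(LEAST k. 1 \<le> k \<and> k \<le> 8 \<and> close p (ws ! (k - 1)) w) = (1::nat)"
    by (rule Least_equality) (use close in \<open>auto simp: ws_def alternating_seq_def\<close>)
  ultimately have "kstar p w ws = 1"
    by (simp add: kstar_def)
  then have "final_reward p w ws = gfun p (hdist (ones p) w)"
    by (simp add: final_reward_def fval_def ws_def alternating_seq_def gfun_def hdist_def)
  also have "\<dots> \<ge> 1/4"
    using w p by (simp add: Wstar_def gfun_def field_simps)
  finally have "1/4 \<le> final_reward p w ws" .
  also have "final_reward p w ws \<le> opt_reward p w"
    unfolding opt_reward_def ws_def using alternating_seq_in_Wcirc[OF w] finite_Wcirc
    by (intro Max_ge) auto
  finally show ?thesis .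
qed

section \<open>Informative observations\<close>

fun early_signal :: "nat \<Rightarrow> nat \<Rightarrow> event list \<Rightarrow> bool" where
  "early_signal M c [] = False"
| "early_signal M c (Sub U V Z # h) = (if U \<or> V \<or> Z then c < M else early_signal M (Suc c) h)"
| "early_signal M c (Ext v # h) = early_signal M c h"
| "early_signal M c (Qry a # h) = early_signal M c h"
| "early_signal M c (Stp ws # h) = early_signal M c h"

lemma early_signal_snoc:
  "early_signal M c (h @ [e])
    \<longleftrightarrow> early_signal M c h \<or> (silent h \<and> c + num_subs h < M \<and> \<not> silent_event e)"
proof (induction h arbitrary: c)
  case Nil
  then show ?case by (cases e) (auto simp: silent_def num_subs_def)
next
  case (Cons a h)
  then show ?case by (cases a) (auto simp: silent_def num_subs_Cons)
qed

lemma not_early_signal_imp_many_subs: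
  "\<not> silent h \<Longrightarrow> \<not> early_signal M c h \<Longrightarrow> M < c + num_subs h"
proof (induction h arbitrary: c)
  case (Cons a h)
  then show ?case
    using Cons.IH[of c] Cons.IH[of "Suc c"]
    by (cases a) (auto simp: silent_def num_subs_Cons split: if_splits)
qed (simp add: silent_def)

text \<open>The vector whose closeness U reports: w_(L-1) of the current input, where w_0 = 1.\<close>

definition prev_vec :: "nat \<Rightarrow> event list \<Rightarrow> vec" where
  "prev_vec p h = (ones p # cur h) ! (length (cur h) - 1)"

lemma submission_signal_prob:
  assumes no_signal: "\<not> early_signal M 0 h" and silent: "silent h" and subs: "num_subs h < M"
    and chain: "chain_ok p (cur h)" and p: "0 < p"
  shows "(\<integral>\<^sup>+h'. of_bool (early_signal M 0 h') \<partial>step_kernel p K w h ASub)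
    \<le> of_bool (close p (prev_vec p h) w) + of_bool (close p (last (cur h)) w) + ennreal ((3/4) ^ K)"
    (is "_ \<le> ?c")
proof -
  define s where "s = cur h"
  define U where "U = close p ((ones p # s) ! (length s - 1)) w"
  define V where "V = close p (last s) w"
  have signal: "early_signal M 0 (h @ [Sub U V z]) \<longleftrightarrow> U \<or> V \<or> z" for z
    using no_signal silent subs by (simp add: early_signal_snoc)
  have kernel: "step_kernel p K w h ASub = (if V \<or> length s = K
      then map_pmf (\<lambda>z. h @ [Sub U V z]) (bernoulli_pmf (fval p w s))
      else return_pmf (h @ [Sub U V False]))"
    by (simp add: step_kernel_def s_def U_def V_def Let_def)
  show ?thesis
  proof (cases "U \<or> V")
    case True
    then have "1 \<le> ?c"
      by (auto simp: U_def V_def prev_vec_def s_def intro: add_increasing2 add_increasing)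
    moreover have "(\<integral>\<^sup>+h'. of_bool (early_signal M 0 h') \<partial>step_kernel p K w h ASub) \<le> 1"
      by (rule nn_integral_pmf_le_const) simp
    ultimately show ?thesis by (rule order_trans[rotated])
  next
    case False
    have "(\<integral>\<^sup>+h'. of_bool (early_signal M 0 h') \<partial>step_kernel p K w h ASub) \<le> ennreal ((3/4) ^ K)"
    proof (cases "length s = K")
      case True
      have "0 \<le> fval p w s" "fval p w s \<le> (3/4) ^ K"
        using fval_bounds[OF chain p, of w] True by (simp_all add: s_def)
      moreover have "(3/4::real) ^ K \<le> 1"
        by (rule power_le_one) auto
      ultimately show ?thesis
        using False True signal[of True] signal[of False] by (simp add: kernel ennreal_leI)
    qed (use False signal[of False] in \<open>simp add: kernel\<close>)
    then show ?thesis
      by (simp add: add_increasing)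
  qed
qed

text \<open>
  The value top on histories whose current input is not a chain (they never occur, see wf_hist)
  makes the one-step bound below hold for every history.
\<close>

definition signal_factor :: "nat \<Rightarrow> nat \<Rightarrow> nat \<Rightarrow> vec \<Rightarrow> event list \<Rightarrow> ennreal" where
  "signal_factor p K M w h =
    (if silent h \<and> num_subs h < M \<and> cur h \<noteq> [] then
      (if chain_ok p (cur h)
       then of_bool (close p (prev_vec p h) w) + of_bool (close p (last (cur h)) w) + ennreal ((3/4) ^ K)
       else \<top>)
     else 0)"

definition signal_hazard :: "nat \<Rightarrow> nat \<Rightarrow> nat \<Rightarrow> vec \<Rightarrow> planner \<Rightarrow> event list \<Rightarrow> ennreal" where
  "signal_hazard p K M w P h =
    (if stopped h then 0 else ennreal (pmf (P h) ASub) * signal_factor p K M w h)"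

lemma step_kernel_early_signal_le:
  assumes valid: "valid_planner p K P" and p: "0 < p" and a: "a \<in> set_pmf (P h)"
    and no_signal: "\<not> early_signal M 0 h"
  shows "(\<integral>\<^sup>+h'. of_bool (early_signal M 0 h') \<partial>step_kernel p K w h a)
    \<le> signal_factor p K M w h * indicator {ASub} a"
proof (cases "a = ASub \<and> silent h \<and> num_subs h < M")
  case True
  moreover have "legal p K h a"
    using a valid by (simp add: valid_planner_def)
  ultimately have "cur h \<noteq> []"
    by simp
  with True show ?thesis
    using no_signal submission_signal_prob[of M h p K w] p by (simp add: signal_factor_def)
next
  case False
  have "(\<integral>\<^sup>+h'. of_bool (early_signal M 0 h') \<partial>step_kernel p K w h a) \<le> 0"
  proof (rule nn_integral_pmf_le_const)
    fix h' assume "h' \<in> set_pmf (step_kernel p K w h a)"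
    then obtain e where "h' = h @ [e]" "is_sub e \<longleftrightarrow> a = ASub"
      by (blast dest: set_pmf_step_kernel)
    then show "of_bool (early_signal M 0 h') \<le> (0::ennreal)"
      using False no_signal by (auto simp: early_signal_snoc silent_event_if_not_sub)
  qed
  then show ?thesis by simp
qed

lemma early_signal_step:
  assumes valid: "valid_planner p K P" and p: "0 < p"
  shows "(\<integral>\<^sup>+h'. of_bool (early_signal M 0 h') \<partial>step p K w P h)
    \<le> of_bool (early_signal M 0 h) + signal_hazard p K M w P h"
proof (cases "stopped h \<or> early_signal M 0 h")
  case True
  moreover have "(\<integral>\<^sup>+h'. of_bool (early_signal M 0 h') \<partial>step p K w P h) \<le> 1"
    by (rule nn_integral_pmf_le_const) simp
  ultimately show ?thesis
    by (auto intro: add_increasing2)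
next
  case False
  have "(\<integral>\<^sup>+h'. of_bool (early_signal M 0 h') \<partial>step p K w P h)
      = (\<integral>\<^sup>+a. (\<integral>\<^sup>+h'. of_bool (early_signal M 0 h') \<partial>step_kernel p K w h a) \<partial>P h)"
    using False by (simp add: step_eq)
  also have "\<dots> \<le> (\<integral>\<^sup>+a. signal_factor p K M w h * indicator {ASub} a \<partial>P h)"
    using False by (intro nn_integral_mono_AE AE_pmfI step_kernel_early_signal_le[OF valid p]) auto
  also have "\<dots> = signal_factor p K M w h * ennreal (pmf (P h) ASub)"
    by (simp add: nn_integral_cmult_indicator emeasure_pmf_single)
  also have "\<dots> = signal_hazard p K M w P h"
    using False by (simp add: signal_hazard_def mult.commute)
  finally show ?thesis
    by (simp add: add_increasing)
qed

section \<open>The counting inequality\<close>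

definition close_hazard :: "nat \<Rightarrow> nat \<Rightarrow> nat \<Rightarrow> vec \<Rightarrow> planner \<Rightarrow> event list \<Rightarrow> ennreal" where
  "close_hazard p Q M w P h =
    of_bool (silent h \<and> wf_hist p h \<and> num_queries h \<le> Q \<and> \<not> stopped h \<and> num_subs h < M \<and> cur h \<noteq> [])
    * ennreal (pmf (P h) ASub) * (of_bool (close p (prev_vec p h) w) + of_bool (close p (last (cur h)) w))"

lemma signal_hazard_le:
  assumes "wf_hist p h" "num_queries h \<le> Q"
  shows "signal_hazard p K M w P h \<le> close_hazard p Q M w P h + capped_sub_prob M P h * ennreal ((3/4) ^ K)"
proof (cases "\<not> stopped h \<and> silent h \<and> num_subs h < M \<and> cur h \<noteq> []")
  case True
  with assms have "signal_hazard p K M w P h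
      = close_hazard p Q M w P h + capped_sub_prob M P h * ennreal ((3/4) ^ K)"
    by (simp add: signal_hazard_def signal_factor_def close_hazard_def capped_sub_prob_def wf_hist_def
        distrib_left)
  then show ?thesis by simp
qed (auto simp: signal_hazard_def signal_factor_def)

lemma sum_close_hazard_le:
  assumes "finite S" "S \<subseteq> cube p"
  shows "(\<Sum>w\<in>S. close_hazard p Q M w P h) \<le> 2 * of_nat (ball_size p) * capped_sub_prob M P h"
proof (cases "silent h \<and> wf_hist p h \<and> num_queries h \<le> Q \<and> \<not> stopped h \<and> num_subs h < M \<and> cur h \<noteq> []")
  case True
  then have "set (cur h) \<subseteq> cube p"
    by (simp add: wf_hist_def chain_ok_def)
  with True have vecs: "prev_vec p h \<in> cube p" "last (cur h) \<in> cube p"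
    by (auto simp: prev_vec_def intro: nth_ones_Cons_in_cube)
  have "(\<Sum>w\<in>S. close_hazard p Q M w P h) = ennreal (pmf (P h) ASub) *
      ((\<Sum>w\<in>S. of_bool (close p (prev_vec p h) w)) + (\<Sum>w\<in>S. of_bool (close p (last (cur h)) w)))"
    using True by (simp add: close_hazard_def flip: sum.distrib sum_distrib_left del: sum_of_bool_eq)
  also have "\<dots> \<le> ennreal (pmf (P h) ASub) * (of_nat (ball_size p) + of_nat (ball_size p))"
    by (intro mult_left_mono add_mono sum_close_le_ball_size assms vecs) simp
  also have "\<dots> = 2 * of_nat (ball_size p) * capped_sub_prob M P h"
    using True by (simp add: capped_sub_prob_def mult_2 algebra_simps)
  finally show ?thesis .
qed (auto simp: close_hazard_def)

definition silent_output_close :: "nat \<Rightarrow> nat \<Rightarrow> vec \<Rightarrow> event list \<Rightarrow> ennreal" where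
  "silent_output_close p Q w h = of_bool (silent h \<and> wf_hist p h \<and> num_queries h \<le> Q \<and> output_close p w h)"

lemma sum_silent_output_close_le:
  assumes "finite S" "S \<subseteq> cube p"
  shows "(\<Sum>w\<in>S. silent_output_close p Q w h) \<le> 8 * of_nat (ball_size p)"
proof (cases "silent h \<and> wf_hist p h \<and> num_queries h \<le> Q \<and> stopped h")
  case True
  then have "out_seq h \<in> Wcirc p 8"
    using Stp_out_seq by (auto simp: wf_hist_def)
  then have vecs: "out_seq h ! k \<in> cube p" if "k < 8" for k
    using that by (auto simp: Wcirc_def chain_ok_def)
  have "silent_output_close p Q w h \<le> (\<Sum>k<8. of_bool (close p (out_seq h ! k) w))" for w
  proof (cases "output_close p w h")
    case True
    then obtain k where "k < 8" "close p (out_seq h ! k) w"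
      by (auto simp: output_close_def)
    then have "of_bool (close p (out_seq h ! k) w) \<le> (\<Sum>k<8. of_bool (close p (out_seq h ! k) w) :: ennreal)"
      by (intro member_le_sum) auto
    with \<open>close p (out_seq h ! k) w\<close> show ?thesis
      by (simp add: silent_output_close_def)
  qed (simp add: silent_output_close_def)
  then have "(\<Sum>w\<in>S. silent_output_close p Q w h) \<le> (\<Sum>k<8. \<Sum>w\<in>S. of_bool (close p (out_seq h ! k) w))"
    by (subst sum.swap) (rule sum_mono)
  also have "\<dots> \<le> (\<Sum>k<(8::nat). of_nat (ball_size p))"
    using vecs assms by (intro sum_mono sum_close_le_ball_size) auto
  finally show ?thesis by simp
qed (auto simp: silent_output_close_def output_close_def)

lemma output_close_le:
  assumes "wf_hist p h" "num_queries h \<le> Q"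
  shows "of_bool (output_close p w h)
    \<le> of_bool (early_signal M 0 h) + of_bool (M \<le> num_rounds h) + silent_output_close p Q w h"
proof (cases "silent h \<or> early_signal M 0 h")
  case False
  then have "M \<le> num_rounds h"
    using not_early_signal_imp_many_subs[of h M 0] num_subs_le_num_rounds[of h] by simp
  then show ?thesis
    by (simp add: add_increasing2)
qed (use assms in \<open>auto simp: silent_output_close_def add_increasing add_increasing2\<close>)

lemma expected_early_signal_le:
  assumes valid: "valid_planner p K P" and p: "0 < p" and w: "w \<in> cube p"
    and queries: "\<And>t h. h \<in> set_pmf (hist p K w P t) \<Longrightarrow> num_queries h \<le> Q"
  shows "(\<integral>\<^sup>+h. of_bool (early_signal M 0 h) \<partial>hist p K w P n)
    \<le> of_nat ((p + 1) ^ Q) * (\<Sum>t<n. \<integral>\<^sup>+h. close_hazard p Q M w P h \<partial>kernel_iter [] (blind_step p P) t)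
      + ennreal ((3/4) ^ K) * of_nat M"
proof -
  have "(\<integral>\<^sup>+h. of_bool (early_signal M 0 h) \<partial>hist p K w P n)
      \<le> (\<Sum>t<n. \<integral>\<^sup>+h. signal_hazard p K M w P h \<partial>hist p K w P t)"
    using nn_integral_kernel_iter_le[of "step p K w P" "\<lambda>h. of_bool (early_signal M 0 h)"
        "signal_hazard p K M w P" "[]" n] early_signal_step[OF valid p]
    by (simp add: hist_eq_kernel_iter)
  also have "\<dots> \<le> (\<Sum>t<n. (\<integral>\<^sup>+h. close_hazard p Q M w P h \<partial>hist p K w P t)
      + (\<integral>\<^sup>+h. capped_sub_prob M P h \<partial>hist p K w P t) * ennreal ((3/4) ^ K))"
  proof (intro sum_mono)
    fix t
    have "(\<integral>\<^sup>+h. signal_hazard p K M w P h \<partial>hist p K w P t)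
        \<le> (\<integral>\<^sup>+h. close_hazard p Q M w P h + capped_sub_prob M P h * ennreal ((3/4) ^ K) \<partial>hist p K w P t)"
      by (intro nn_integral_mono_AE AE_pmfI signal_hazard_le wf_hist_hist[OF valid w] queries)
    then show "(\<integral>\<^sup>+h. signal_hazard p K M w P h \<partial>hist p K w P t)
        \<le> (\<integral>\<^sup>+h. close_hazard p Q M w P h \<partial>hist p K w P t)
          + (\<integral>\<^sup>+h. capped_sub_prob M P h \<partial>hist p K w P t) * ennreal ((3/4) ^ K)"
      by (simp add: nn_integral_add nn_integral_multc)
  qed
  also have "\<dots> = (\<Sum>t<n. \<integral>\<^sup>+h. close_hazard p Q M w P h \<partial>hist p K w P t)
      + (\<Sum>t<n. \<integral>\<^sup>+h. capped_sub_prob M P h \<partial>hist p K w P t) * ennreal ((3/4) ^ K)"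
    by (simp add: sum.distrib sum_distrib_right)
  also have "\<dots> \<le> of_nat ((p + 1) ^ Q) * (\<Sum>t<n. \<integral>\<^sup>+h. close_hazard p Q M w P h \<partial>kernel_iter [] (blind_step p P) t)
      + of_nat M * ennreal ((3/4) ^ K)"
    unfolding sum_distrib_left
    by (intro add_mono mult_right_mono sum_mono sum_capped_sub_prob_hist hist_le_blind_bounded_queries)
       (auto simp: close_hazard_def wf_hist_def)
  finally show ?thesis
    by (simp add: mult.commute)
qed

lemma markov_num_rounds:
  assumes "0 < M"
  shows "(\<integral>\<^sup>+h. of_bool (M \<le> num_rounds h) \<partial>measure_pmf D)
    \<le> ennreal (1 / real M) * (\<integral>\<^sup>+h. ennreal (real (N_approx h)) \<partial>measure_pmf D)"
proof -
  have "of_bool (M \<le> num_rounds h) \<le> ennreal (1 / real M) * ennreal (real (N_approx h))" for h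
  proof (cases "M \<le> num_rounds h")
    case True
    then have "1 \<le> 1 / real M * real (N_approx h)"
      using assms by (simp add: N_approx_def field_simps)
    then show ?thesis
      using True by (simp add: ennreal_mult'[symmetric] ennreal_leI del: ennreal_1 flip: ennreal_1)
  qed simp
  then have "(\<integral>\<^sup>+h. of_bool (M \<le> num_rounds h) \<partial>measure_pmf D)
      \<le> (\<integral>\<^sup>+h. ennreal (1 / real M) * ennreal (real (N_approx h)) \<partial>measure_pmf D)"
    by (intro nn_integral_mono)
  then show ?thesis
    by (simp add: nn_integral_cmult)
qed

lemma expected_reward_le:
  assumes valid: "valid_planner p K P" and p: "0 < p" and w: "w \<in> cube p"
    and queries: "\<And>t h. h \<in> set_pmf (hist p K w P t) \<Longrightarrow> num_queries h \<le> Q" and M: "0 < M"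
  shows "(\<integral>\<^sup>+h. ennreal (hist_reward p w h) \<partial>hist p K w P n)
    \<le> of_nat ((p + 1) ^ Q) * (\<Sum>t<n. \<integral>\<^sup>+h. close_hazard p Q M w P h \<partial>kernel_iter [] (blind_step p P) t)
      + of_nat ((p + 1) ^ Q) * (\<integral>\<^sup>+h. silent_output_close p Q w h \<partial>kernel_iter [] (blind_step p P) n)
      + (ennreal ((3/4) ^ K) * of_nat M
         + ennreal (1 / real M) * (\<integral>\<^sup>+h. ennreal (real (N_approx h)) \<partial>hist p K w P n)
         + ennreal ((3/4) ^ 8))"
proof -
  have "(\<integral>\<^sup>+h. ennreal (hist_reward p w h) \<partial>hist p K w P n)
      \<le> (\<integral>\<^sup>+h. of_bool (early_signal M 0 h) + of_bool (M \<le> num_rounds h)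
          + silent_output_close p Q w h + ennreal ((3/4) ^ 8) \<partial>hist p K w P n)"
  proof (intro nn_integral_mono_AE AE_pmfI)
    fix h assume h: "h \<in> set_pmf (hist p K w P n)"
    have wf: "wf_hist p h"
      using wf_hist_hist[OF valid w h] .
    have "ennreal (hist_reward p w h) \<le> ennreal (of_bool (output_close p w h) + (3/4) ^ 8)"
      by (intro ennreal_leI hist_reward_le wf p)
    also have "\<dots> = of_bool (output_close p w h) + ennreal ((3/4) ^ 8)"
      by (cases "output_close p w h") (simp_all add: ennreal_plus del: ennreal_plus_if)
    also have "\<dots> \<le> of_bool (early_signal M 0 h) + of_bool (M \<le> num_rounds h)
        + silent_output_close p Q w h + ennreal ((3/4) ^ 8)"
      using output_close_le[OF wf queries[OF h]] by (rule add_right_mono)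
    finally show "ennreal (hist_reward p w h) \<le> \<dots>" .
  qed
  also have "\<dots> = (\<integral>\<^sup>+h. of_bool (early_signal M 0 h) \<partial>hist p K w P n)
      + (\<integral>\<^sup>+h. of_bool (M \<le> num_rounds h) \<partial>hist p K w P n)
      + (\<integral>\<^sup>+h. silent_output_close p Q w h \<partial>hist p K w P n) + ennreal ((3/4) ^ 8)"
    by (simp add: nn_integral_add measure_pmf.emeasure_space_1)
  also have "\<dots> \<le> (of_nat ((p + 1) ^ Q) * (\<Sum>t<n. \<integral>\<^sup>+h. close_hazard p Q M w P h \<partial>kernel_iter [] (blind_step p P) t)
        + ennreal ((3/4) ^ K) * of_nat M)
      + ennreal (1 / real M) * (\<integral>\<^sup>+h. ennreal (real (N_approx h)) \<partial>hist p K w P n)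
      + of_nat ((p + 1) ^ Q) * (\<integral>\<^sup>+h. silent_output_close p Q w h \<partial>kernel_iter [] (blind_step p P) n)
      + ennreal ((3/4) ^ 8)"
    by (intro add_mono order_refl expected_early_signal_le markov_num_rounds hist_le_blind_bounded_queries
        assms) (auto simp: silent_output_close_def wf_hist_def)
  finally show ?thesis
    by (simp add: ac_simps)
qed

lemma sum_expected_close_hazard_le:
  assumes "finite S" "S \<subseteq> cube p"
  shows "(\<Sum>w\<in>S. \<Sum>t<n. \<integral>\<^sup>+h. close_hazard p Q M w P h \<partial>kernel_iter [] (blind_step p P) t)
    \<le> 2 * of_nat (ball_size p) * of_nat M"
proof -
  have "(\<Sum>w\<in>S. \<Sum>t<n. \<integral>\<^sup>+h. close_hazard p Q M w P h \<partial>kernel_iter [] (blind_step p P) t)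
      = (\<Sum>t<n. \<integral>\<^sup>+h. (\<Sum>w\<in>S. close_hazard p Q M w P h) \<partial>kernel_iter [] (blind_step p P) t)"
    by (subst sum.swap) (simp add: nn_integral_sum)
  also have "\<dots> \<le> (\<Sum>t<n. \<integral>\<^sup>+h. 2 * of_nat (ball_size p) * capped_sub_prob M P h
      \<partial>kernel_iter [] (blind_step p P) t)"
    by (intro sum_mono nn_integral_mono sum_close_hazard_le assms)
  also have "\<dots> = 2 * of_nat (ball_size p) * (\<Sum>t<n. \<integral>\<^sup>+h. capped_sub_prob M P h \<partial>kernel_iter [] (blind_step p P) t)"
    by (simp add: nn_integral_cmult sum_distrib_left)
  also have "\<dots> \<le> 2 * of_nat (ball_size p) * of_nat M"
    by (intro mult_left_mono sum_capped_sub_prob_blind) simp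
  finally show ?thesis .
qed

lemma sum_expected_reward_le:
  assumes valid: "valid_planner p K P" and p: "0 < p" and S: "finite S" "S \<subseteq> cube p"
    and queries: "\<And>w t h. w \<in> S \<Longrightarrow> h \<in> set_pmf (hist p K w P t) \<Longrightarrow> num_queries h \<le> Q"
    and actions: "\<And>w. w \<in> S \<Longrightarrow> (\<integral>\<^sup>+h. ennreal (real (N_approx h)) \<partial>hist p K w P n) \<le> ennreal T"
    and M: "0 < M" and T: "0 \<le> T"
  shows "(\<Sum>w\<in>S. \<integral>\<^sup>+h. ennreal (hist_reward p w h) \<partial>hist p K w P n)
    \<le> ennreal (real ((p + 1) ^ Q) * (2 * real (ball_size p) * real M) + real ((p + 1) ^ Q) * (8 * real (ball_size p))
        + real (card S) * ((3/4) ^ K * real M + T / real M + (3/4) ^ 8))"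
proof -
  let ?W = "of_nat ((p + 1) ^ Q) :: ennreal"
  let ?B = "of_nat (ball_size p) :: ennreal"
  let ?e = "ennreal ((3/4) ^ K) * of_nat M + ennreal (1 / real M) * ennreal T + ennreal ((3/4) ^ 8)"
  define hazards where
    "hazards w = (\<Sum>t<n. \<integral>\<^sup>+h. close_hazard p Q M w P h \<partial>kernel_iter [] (blind_step p P) t)" for w
  define outputs where
    "outputs w = (\<integral>\<^sup>+h. silent_output_close p Q w h \<partial>kernel_iter [] (blind_step p P) n)" for w
  have per_vector: "(\<integral>\<^sup>+h. ennreal (hist_reward p w h) \<partial>hist p K w P n)
      \<le> ?W * hazards w + ?W * outputs w + ?e" if w: "w \<in> S" for w
  proof -
    have "(\<integral>\<^sup>+h. ennreal (hist_reward p w h) \<partial>hist p K w P n)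
        \<le> ?W * hazards w + ?W * outputs w + (ennreal ((3/4) ^ K) * of_nat M
          + ennreal (1 / real M) * (\<integral>\<^sup>+h. ennreal (real (N_approx h)) \<partial>hist p K w P n)
          + ennreal ((3/4) ^ 8))"
      unfolding hazards_def outputs_def using w S by (intro expected_reward_le valid p queries M) auto
    also have "\<dots> \<le> ?W * hazards w + ?W * outputs w + ?e"
      by (intro add_mono order_refl mult_left_mono actions w) simp
    finally show ?thesis .
  qed
  have hazards: "(\<Sum>w\<in>S. hazards w) \<le> 2 * ?B * of_nat M"
    unfolding hazards_def by (rule sum_expected_close_hazard_le[OF S])
  have outputs: "(\<Sum>w\<in>S. outputs w) \<le> 8 * ?B"
    unfolding outputs_def using S
    by (simp add: nn_integral_sum[symmetric] nn_integral_pmf_le_const sum_silent_output_close_le)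
  have "(\<Sum>w\<in>S. \<integral>\<^sup>+h. ennreal (hist_reward p w h) \<partial>hist p K w P n)
      \<le> (\<Sum>w\<in>S. ?W * hazards w + ?W * outputs w + ?e)"
    by (rule sum_mono) (rule per_vector)
  also have "\<dots> = ?W * (\<Sum>w\<in>S. hazards w) + ?W * (\<Sum>w\<in>S. outputs w) + of_nat (card S) * ?e"
    by (simp only: sum.distrib sum_distrib_left sum_constant distrib_left)
  also have "\<dots> \<le> ?W * (2 * ?B * of_nat M) + ?W * (8 * ?B) + of_nat (card S) * ?e"
    by (intro add_mono mult_left_mono hazards outputs order_refl) simp_all
  also have "\<dots> = ennreal (real ((p + 1) ^ Q) * (2 * real (ball_size p) * real M) + real ((p + 1) ^ Q) * (8 * real (ball_size p))
        + real (card S) * ((3/4) ^ K * real M + T / real M + (3/4) ^ 8))"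
  proof -
    have "ennreal (1 / real M) * ennreal T = ennreal (T / real M)"
      using T by (simp add: ennreal_mult[symmetric])
    then show ?thesis
      using T by (simp add: ennreal_of_nat_eq_real_of_nat ennreal_mult ennreal_plus)
  qed
  finally show ?thesis .
qed

section \<open>Numerical estimates\<close>

lemma le_two_powr_of_power_le:
  fixes a u :: real
  assumes "0 \<le> a" "0 < n" "a ^ n \<le> 2 powr (real n * u)"
  shows "a \<le> 2 powr u"
proof -
  have "a ^ n \<le> (2 powr u) ^ n"
    using assms(3) by (simp add: powr_power)
  with assms(1,2) show ?thesis
    by (metis gr0_implies_Suc power_le_imp_le_base powr_ge_zero)
qed

lemma power_le_two_powr:
  fixes a u :: real
  assumes "0 < a" "a \<le> 2 powr u"
  shows "a ^ k \<le> 2 powr (u * real k)"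
proof -
  have "a ^ k = a powr real k"
    using assms by (simp add: powr_realpow)
  also have "\<dots> \<le> (2 powr u) powr real k"
    using assms by (intro powr_mono2) auto
  finally show ?thesis
    by (simp add: powr_powr)
qed

lemma three_quarters_power_le: "(3/4::real) ^ K \<le> 2 powr (- real K / 4)"
proof -
  have "(3/4::real) \<le> 2 powr (-1/4)"
    by (rule le_two_powr_of_power_le[where n = 4]) (auto simp: powr_minus power_divide)
  then show ?thesis
    using power_le_two_powr[of "3/4" "-1/4" K] by (simp add: field_simps)
qed

lemma ball_size_bound_le: "(256/27::real) ^ j \<le> 16 ^ j * 2 powr (- real j / 2)"
proof -
  have "(16/27::real) \<le> 2 powr (-1/2)"
    by (rule le_two_powr_of_power_le[where n = 2]) (auto simp: powr_minus power_divide)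
  then have "(16/27::real) ^ j \<le> 2 powr (- real j / 2)"
    using power_le_two_powr[of "16/27" "-1/2" j] by (simp add: field_simps)
  then have "16 ^ j * (16/27::real) ^ j \<le> 16 ^ j * 2 powr (- real j / 2)"
    by (rule mult_left_mono) simp
  then show ?thesis
    by (simp add: power_mult_distrib[symmetric])
qed

lemma two_powr_minus_11: "(2::real) powr (-11) = 1/2048"
  by (simp add: powr_minus)

lemma query_factor_le:
  fixes p :: nat
  assumes p: "2 \<le> p"
  defines "Q \<equiv> nat \<lfloor>ln 2 / 256 * real p / ln (real p)\<rfloor>"
  shows "real ((p + 1) ^ Q) \<le> 2 powr (real p / 128)"
proof -
  have ln_p: "0 < ln (real p)"
    using p by simp
  then have "real Q \<le> ln 2 / 256 * real p / ln (real p)"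
    unfolding Q_def by simp
  note Q = this
  have "2 * p \<le> p * p"
    using p by (intro mult_right_mono) auto
  then have "real (p + 1) \<le> real (p * p)"
    using p by (simp only: of_nat_le_iff)
  then have "real p + 1 \<le> real p ^ 2"
    by (simp add: power2_eq_square)
  then have "ln (real p + 1) \<le> ln (real p ^ 2)"
    using p by (subst ln_le_cancel_iff) auto
  then have "ln (real p + 1) \<le> 2 * ln (real p)"
    by (simp add: ln_realpow)
  then have "real Q * ln (real p + 1) \<le> ln 2 / 256 * real p / ln (real p) * (2 * ln (real p))"
    using Q by (intro mult_mono) auto
  also have "\<dots> = real p / 128 * ln 2"
    using ln_p by (simp add: field_simps)
  finally have "exp (real Q * ln (real p + 1)) \<le> exp (real p / 128 * ln 2)"
    by simp
  then show ?thesis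
    by (simp add: powr_def powr_realpow[symmetric] add.commute)
qed

lemma error_terms_le:
  fixes M T :: real and K :: nat
  assumes K: "1000 \<le> K" and T: "1 \<le> T" "T \<le> 2 powr (real K / 128)"
    and M: "16 * T \<le> M" "M \<le> 16 * T + 1"
  shows "(3/4) ^ K * M + T / M + (3/4) ^ 8 \<le> 11681/65536"
proof -
  have "(3/4::real) ^ K * M \<le> 2 powr (- real K / 4) * (17 * 2 powr (real K / 128))"
    using three_quarters_power_le T M by (intro mult_mono) auto
  also have "\<dots> = 17 * 2 powr (- real K / 4 + real K / 128)"
    by (simp only: powr_add mult_ac)
  also have "\<dots> \<le> 17 * 2 powr (-11)"
    using K by (intro mult_left_mono powr_mono) auto
  finally have "(3/4::real) ^ K * M \<le> 17/2048"
    by (simp add: two_powr_minus_11)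
  moreover have "T / M \<le> 1/16"
    using T M by (simp add: field_simps)
  moreover have "(3/4::real) ^ 8 = 6561/65536"
    by (simp add: power_divide)
  ultimately show ?thesis
    by linarith
qed

text \<open>
  The counting inequality is impossible: the left side is about 2^p / 4, while the
  ball sizes contribute only (256/27)^(p/4) = 2^p (16/27)^(p/4) times subexponential factors.
\<close>

lemma counting_inequality_absurd:
  fixes cS B W M T :: real and j K :: nat
  assumes j: "250 \<le> j" and K: "1000 \<le> K"
    and card: "16 ^ j - 2 * B \<le> cS" and B: "0 \<le> B" "B \<le> (256/27) ^ j"
    and W: "0 \<le> W" "W \<le> 2 powr (real j / 32)"
    and T: "1 \<le> T" "T \<le> 2 powr (real j / 32)" "T \<le> 2 powr (real K / 128)"
    and M: "16 * T \<le> M" "M \<le> 16 * T + 1"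
    and ineq: "23/100 * cS \<le> W * (2 * B * M) + W * (8 * B) + cS * ((3/4) ^ K * M + T / M + (3/4) ^ 8)"
  shows False
proof -
  define X :: real where "X = 16 ^ j"
  define q :: real where "q = 2 powr (- real j / 2)"
  define x :: real where "x = 2 powr (real j / 32)"
  have X: "0 < X"
    by (simp add: X_def)
  have BX: "B \<le> X * q"
    using B ball_size_bound_le[of j] by (simp add: X_def q_def)
  have "q \<le> 2 powr (-2)"
    unfolding q_def using j by (intro powr_mono) auto
  then have "X * q \<le> X * (1/4)"
    using X by (intro mult_left_mono) (auto simp: powr_minus)
  then have cS: "X / 2 \<le> cS"
    using card BX X_def by linarith
  have "cS * ((3/4) ^ K * M + T / M + (3/4) ^ 8) \<le> cS * (11681/65536)"
    using error_terms_le[OF K T(1,3) M] cS X by (intro mult_left_mono) auto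
  moreover have "W * (2 * B * M) + W * (8 * B) = W * B * (2 * M + 8)"
    by (simp add: algebra_simps)
  ultimately have "cS / 20 \<le> W * B * (2 * M + 8)"
    using ineq cS X by linarith
  also have "\<dots> \<le> x * (X * q) * (42 * x)"
    using W B BX M T X by (intro mult_mono) (auto simp: x_def)
  also have "\<dots> = 42 * X * (q * x * x)"
    by (simp add: algebra_simps)
  also have "\<dots> = 42 * X * 2 powr (- real j / 2 + real j / 32 + real j / 32)"
    unfolding q_def x_def by (simp only: powr_add mult.assoc)
  also have "\<dots> \<le> 42 * X * 2 powr (-11)"
    using j X by (intro mult_left_mono powr_mono) auto
  finally show False
    using cS X by (simp add: two_powr_minus_11)
qed

lemma expected_hist_reward_mono:
  assumes "n \<le> m"
  shows "(\<integral>\<^sup>+h. ennreal (hist_reward p w h) \<partial>hist p K w P n)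
    \<le> (\<integral>\<^sup>+h. ennreal (hist_reward p w h) \<partial>hist p K w P m)"
proof (rule lift_Suc_mono_le[OF _ assms])
  fix n
  have "ennreal (hist_reward p w h) \<le> (\<integral>\<^sup>+h'. ennreal (hist_reward p w h') \<partial>step p K w P h)" for h
    by (cases "stopped h") (simp_all add: hist_reward_def)
  then have "(\<integral>\<^sup>+h. ennreal (hist_reward p w h) \<partial>hist p K w P n)
      \<le> (\<integral>\<^sup>+h. (\<integral>\<^sup>+h'. ennreal (hist_reward p w h') \<partial>step p K w P h) \<partial>hist p K w P n)"
    by (intro nn_integral_mono)
  then show "(\<integral>\<^sup>+h. ennreal (hist_reward p w h) \<partial>hist p K w P n)
      \<le> (\<integral>\<^sup>+h. ennreal (hist_reward p w h) \<partial>hist p K w P (Suc n))"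
    by simp
qed

lemma sound_imp_expected_reward_gt:
  assumes sound: "sound p K P" and w: "w \<in> Wstar p" and p: "0 < p"
  shows "\<exists>n. ennreal (23/100) < (\<integral>\<^sup>+h. ennreal (hist_reward p w h) \<partial>hist p K w P n)"
proof -
  define R where "R = (SUP n. \<integral>\<^sup>+h. ennreal (hist_reward p w h) \<partial>hist p K w P n)"
  have "\<bar>expected_R p K w P - opt_reward p w\<bar> \<le> 1/100"
    using sound w by (simp add: sound_def)
  then have "opt_reward p w - 1/100 \<le> expected_R p K w P"
    by (simp only: abs_le_iff) linarith
  with opt_reward_ge_quarter[OF w p] have R: "24/100 \<le> enn2real R"
    by (simp add: expected_R_def R_def)
  then have "R = ennreal (enn2real R)"
    by (cases R) auto
  moreover have "ennreal (23/100) < ennreal (enn2real R)"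
    using R by (simp add: ennreal_less_iff)
  ultimately have "ennreal (23/100) < R"
    by simp
  then show ?thesis
    by (simp add: R_def less_SUP_iff)
qed

lemma finite_Wstar: "finite (Wstar p)"
  by (rule finite_subset[OF _ finite_cube]) (auto simp: Wstar_def)

lemma sound_imp_sum_expected_reward_ge:
  assumes "sound p K P" "0 < p"
  shows "\<exists>n. ennreal (23/100 * real (card (Wstar p)))
    \<le> (\<Sum>w\<in>Wstar p. \<integral>\<^sup>+h. ennreal (hist_reward p w h) \<partial>hist p K w P n)"
proof -
  obtain n where n: "\<forall>w\<in>Wstar p. ennreal (23/100) < (\<integral>\<^sup>+h. ennreal (hist_reward p w h) \<partial>hist p K w P (n w))"
    using sound_imp_expected_reward_gt[OF assms(1) _ assms(2)] by metis
  define N where "N = Max (n ` Wstar p)"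
  have "ennreal (23/100) \<le> (\<integral>\<^sup>+h. ennreal (hist_reward p w h) \<partial>hist p K w P N)" if w: "w \<in> Wstar p" for w
  proof -
    have "n w \<le> N"
      using w finite_Wstar by (simp add: N_def)
    then have "(\<integral>\<^sup>+h. ennreal (hist_reward p w h) \<partial>hist p K w P (n w))
        \<le> (\<integral>\<^sup>+h. ennreal (hist_reward p w h) \<partial>hist p K w P N)"
      by (rule expected_hist_reward_mono)
    with n w show ?thesis
      by (meson less_imp_le order_trans)
  qed
  then have "(\<Sum>w\<in>Wstar p. ennreal (23/100))
      \<le> (\<Sum>w\<in>Wstar p. \<integral>\<^sup>+h. ennreal (hist_reward p w h) \<partial>hist p K w P N)"
    by (rule sum_mono)
  moreover have "(\<Sum>w\<in>Wstar p. ennreal (23/100)) = ennreal (23/100 * real (card (Wstar p)))"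
    by (simp add: ennreal_of_nat_eq_real_of_nat flip: ennreal_mult)
  ultimately show ?thesis by auto
qed

lemma num_queries_le_floor:
  assumes "query_bounded p K P X" "w \<in> Wstar p" "h \<in> set_pmf (hist p K w P t)"
  shows "num_queries h \<le> nat \<lfloor>X\<rfloor>"
proof -
  have "real (num_queries h) < X"
    using assms by (auto simp: query_bounded_def)
  then show ?thesis by linarith
qed

lemma nn_integral_N_approx_le_expected_N:
  "(\<integral>\<^sup>+h. ennreal (real (N_approx h)) \<partial>hist p K w P n) \<le> expected_N p K w P"
  unfolding expected_N_def by (rule SUP_upper) simp

lemma expected_actions_lower_bound:
  assumes dvd: "4 dvd p" and large: "1000 \<le> min p K"
    and valid: "valid_planner p K P" and sound: "sound p K P"
    and query_bound: "query_bounded p K P (ln 2 / 256 * real p / ln (real p))"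
  shows "\<exists>w\<in>Wstar p. ennreal (2 powr (1/128 * real (min p K))) \<le> expected_N p K w P"
proof (rule ccontr)
  assume few_actions: "\<not> ?thesis"
  obtain j where j: "p = 4 * j"
    using dvd by blast
  define T where "T = 2 powr (1/128 * real (min p K))"
  define Q where "Q = nat \<lfloor>ln 2 / 256 * real p / ln (real p)\<rfloor>"
  define M where "M = nat \<lceil>16 * T\<rceil>"
  have p: "0 < p" "2 \<le> p"
    using large by auto
  have T: "1 \<le> T" "T \<le> 2 powr (real j / 32)" "T \<le> 2 powr (real K / 128)"
    unfolding T_def using j by (auto intro: ge_one_powr_ge_zero powr_mono)
  have M: "16 * T \<le> real M" "real M \<le> 16 * T + 1"
    unfolding M_def using T by linarith+
  have actions: "(\<integral>\<^sup>+h. ennreal (real (N_approx h)) \<partial>hist p K w P n) \<le> ennreal T"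
    if "w \<in> Wstar p" for w n
    using nn_integral_N_approx_le_expected_N[of p K w P n] few_actions that
    by (auto simp: T_def not_le)
  obtain n where "ennreal (23/100 * real (card (Wstar p)))
      \<le> (\<Sum>w\<in>Wstar p. \<integral>\<^sup>+h. ennreal (hist_reward p w h) \<partial>hist p K w P n)"
    using sound_imp_sum_expected_reward_ge[OF sound p(1)] by blast
  also have "\<dots> \<le> ennreal (real ((p + 1) ^ Q) * (2 * real (ball_size p) * real M)
      + real ((p + 1) ^ Q) * (8 * real (ball_size p))
      + real (card (Wstar p)) * ((3/4) ^ K * real M + T / real M + (3/4) ^ 8))"
    using M T query_bound unfolding Q_def
    by (intro sum_expected_reward_le valid p(1) finite_Wstar num_queries_le_floor actions)
      (auto simp: Wstar_def)
  finally have counting: "23/100 * real (card (Wstar p))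
      \<le> real ((p + 1) ^ Q) * (2 * real (ball_size p) * real M) + real ((p + 1) ^ Q) * (8 * real (ball_size p))
        + real (card (Wstar p)) * ((3/4) ^ K * real M + T / real M + (3/4) ^ 8)"
    using M T by (subst (asm) ennreal_le_iff) (auto intro!: add_nonneg_nonneg)
  have "real ((p + 1) ^ Q) \<le> 2 powr (real j / 32)"
    using query_factor_le[OF p(2)] j by (simp add: Q_def)
  moreover have "16 ^ j - 2 * real (ball_size p) \<le> real (card (Wstar p))"
    using card_Wstar_ge[of p] j by (simp add: power_mult)
  ultimately show False
    using counting_inequality_absurd[OF _ _ _ _ ball_size_le[OF j] _ _ T M counting] large j by auto
qed

theorem theorem6:
  shows "\<exists>c1 > 0. \<exists>c2 > 0. \<exists>m0::nat. \<forall>p K (P::planner).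
           4 dvd p \<longrightarrow> m0 \<le> min p K \<longrightarrow> 1 \<le> K \<longrightarrow>
           valid_planner p K P \<longrightarrow> sound p K P \<longrightarrow>
           query_bounded p K P (c1 * real p / ln (real p)) \<longrightarrow>
           (\<exists>wst \<in> Wstar p. ennreal (2 powr (c2 * real (min p K))) \<le> expected_N p K wst P)"
proof -
  have "0 < ln (2::real) / 256" "0 < (1/128::real)"
    by simp_all
  with expected_actions_lower_bound show ?thesis
    by blast
qed

end
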